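(* Suppose a learning dynamic is lossless. Then it guarantees constant regret if and only if it is finitely lossless.
   Context: $\Delta^n=\{\mathbf{x}\in\mathbb{R}^n: x_j\ge 0,\ \sum_j x_j=1\}$; $\mathbf{e}_j$ is the $j$-th standard basis vector. A learning dynamic over $n$ actions is specified by a conversion function $f:\mathbb{R}^n\to\Delta^n$: given an initial state $\mathbf{q}^0\in\mathbb{R}^n$ and an input function $\mathbf{p}:[0,\infty)\to\mathbb{R}^n$ square integrable on bounded intervals, the state is $\mathbf{q}(t)=\mathbf{q}^0+\int_0^t\mathbf{p}(\tau)\,d\tau$ and the strategy is $\mathbf{x}(t)=f(\mathbf{q}(t))$. The learning operator with shift $\mathbf{x}^*\in\mathbb{R}^n$ has state $\mathbf{q}$, input $\mathbf{p}$, output $\mathbf{x}-\mathbf{x}^*$; it is lossless via a storage function $L:\mathbb{R}^n\to\mathbb{R}$ if for every $\mathbf{q}^0$, every $\mathbf{p}$ and every $t\ge0$, $L(\mathbf{q}(t))=L(\mathbf{q}^0)+\int_0^t\langle\mathbf{p}(\tau),\mathbf{x}(\tau)-\mathbf{x}^*\rangle\,d\tau$, and finitely lossless if it is lossless via a storage function bounded from below. A learning dynamic is lossless if its learning operator with any shift is lossless (via some storage function); it is finitely lossless if for every action $j$ its learning operator with shift $\mathbf{e}_j$ is finitely lossless. The regret at time $T>0$ is $\max_j\int_0^T p_j(\tau)\,d\tau-\int_0^T\langle\mathbf{p}(\tau),\mathbf{x}(\tau)\rangle\,d\tau$; the dynamic guarantees constant regret if for every $\mathbf{p}$ and $T>0$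 the regret at time $T$ is bounded above by a constant depending only on $\mathbf{q}^0$. *)

theory Defs
  imports "HOL-Analysis.Analysis"
begin

definition prob_simplex :: "(real^'n) set" where
  "prob_simplex = {x. (\<forall>j. 0 \<le> x $ j) \<and> sum (\<lambda>j. x $ j) UNIV = 1}"

definition admissible_input :: "(real \<Rightarrow> real^'n) \<Rightarrow> bool" where
  "admissible_input p \<longleftrightarrow>
     (\<forall>T\<ge>0. p absolutely_integrable_on {0..T} \<and> (\<lambda>\<tau>. (norm (p \<tau>))\<^sup>2) integrable_on {0..T})"

definition state :: "real^'n \<Rightarrow> (real \<Rightarrow> real^'n) \<Rightarrow> real \<Rightarrow> real^'n" where
  "state q0 p t = q0 + integral {0..t} p"

definition strategy :: "(real^'n \<Rightarrow> real^'n) \<Rightarrow> real^'n \<Rightarrow> (real \<Rightarrow> real^'n) \<Rightarrow> real \<Rightarrow> real^'n" where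
  "strategy f q0 p t = f (state q0 p t)"

definition lossless_via :: "(real^'n \<Rightarrow> real^'n) \<Rightarrow> real^'n \<Rightarrow> (real^'n \<Rightarrow> real) \<Rightarrow> bool" where
  "lossless_via f xs L \<longleftrightarrow>
     (\<forall>q0 p t. admissible_input p \<and> 0 \<le> t \<longrightarrow>
        ((\<lambda>\<tau>. p \<tau> \<bullet> (strategy f q0 p \<tau> - xs)) has_integral (L (state q0 p t) - L q0)) {0..t})"

definition finitely_lossless_via :: "(real^'n \<Rightarrow> real^'n) \<Rightarrow> real^'n \<Rightarrow> (real^'n \<Rightarrow> real) \<Rightarrow> bool" where
  "finitely_lossless_via f xs L \<longleftrightarrow> lossless_via f xs L \<and> bdd_below (range L)"

definition lossless_dynamic :: "(real^'n \<Rightarrow> real^'n) \<Rightarrow> bool" where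
  "lossless_dynamic f \<longleftrightarrow> (\<forall>xs. \<exists>L. lossless_via f xs L)"

definition finitely_lossless_dynamic :: "(real^'n \<Rightarrow> real^'n) \<Rightarrow> bool" where
  "finitely_lossless_dynamic f \<longleftrightarrow> (\<forall>j. \<exists>L. finitely_lossless_via f (axis j 1) L)"

definition regret :: "(real^'n \<Rightarrow> real^'n) \<Rightarrow> real^'n \<Rightarrow> (real \<Rightarrow> real^'n) \<Rightarrow> real \<Rightarrow> real" where
  "regret f q0 p T =
     Max (range (\<lambda>j. integral {0..T} (\<lambda>\<tau>. p \<tau> $ j)))
     - integral {0..T} (\<lambda>\<tau>. p \<tau> \<bullet> strategy f q0 p \<tau>)"

definition constant_regret :: "(real^'n \<Rightarrow> real^'n) \<Rightarrow> bool" where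
  "constant_regret f \<longleftrightarrow>
     (\<forall>q0. \<exists>C. \<forall>p T. admissible_input p \<and> 0 < T \<longrightarrow> regret f q0 p T \<le> C)"

end

theory Submission
  imports Defs
begin

text \<open>Losslessness with shift \<open>e\<^sub>j\<close> says that the regret against the fixed action \<open>j\<close> up to
time \<open>T\<close> equals the drop \<open>L\<^sub>j(q\<^sup>0) - L\<^sub>j(q(T))\<close> of the storage function, so the regret is
\<open>max\<^sub>j (L\<^sub>j(q\<^sup>0) - L\<^sub>j(q(T)))\<close>. If every \<open>L\<^sub>j\<close> is bounded below this is bounded in terms of
\<open>q\<^sup>0\<close>. Conversely, starting from \<open>q\<^sup>0 = 0\<close> the constant input \<open>q\<close> reaches the state \<open>q\<close> at
time 1, so a regret bound \<open>C\<close> gives \<open>L\<^sub>j(q) \<ge> L\<^sub>j(0) - C\<close> for every \<open>q\<close>.\<close>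

lemma admissible_input_component_integrable:
  fixes p :: "real \<Rightarrow> real^'n"
  assumes "admissible_input p" "0 \<le> T"
  shows "(\<lambda>\<tau>. p \<tau> $ j) integrable_on {0..T}"
proof -
  have "p integrable_on {0..T}"
    using assms unfolding admissible_input_def
    using set_lebesgue_integral_eq_integral(1) by blast
  from integrable_component[OF this, of "axis j 1"]
  show ?thesis by (simp add: inner_axis)
qed

lemma admissible_input_const: "admissible_input (\<lambda>\<tau>. q)"
  unfolding admissible_input_def
  by (auto intro!: absolutely_integrable_continuous_real continuous_intros)

lemma state_const_input: "state 0 (\<lambda>\<tau>. q) 1 = q"
  unfolding state_def by simp

lemma lossless_via_axis_storage_drop:
  assumes L: "lossless_via f (axis j 1) L" and p: "admissible_input p" and T: "0 \<le> T"
  shows "integral {0..T} (\<lambda>\<tau>. p \<tau> $ j) - integral {0..T} (\<lambda>\<tau>. p \<tau> \<bullet> strategy f q0 p \<tau>)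
         = L q0 - L (state q0 p T)"
proof -
  have storage: "((\<lambda>\<tau>. p \<tau> \<bullet> (strategy f q0 p \<tau> - axis j 1)) has_integral
      L (state q0 p T) - L q0) {0..T}"
    using L p T unfolding lossless_via_def by blast
  have component: "((\<lambda>\<tau>. p \<tau> $ j) has_integral integral {0..T} (\<lambda>\<tau>. p \<tau> $ j)) {0..T}"
    using admissible_input_component_integrable[OF p T] by (simp add: integrable_integral)
  have "\<And>\<tau>. p \<tau> \<bullet> (strategy f q0 p \<tau> - axis j 1) + p \<tau> $ j = p \<tau> \<bullet> strategy f q0 p \<tau>"
    by (simp add: inner_diff_right inner_axis)
  with has_integral_add[OF storage component]
  have "((\<lambda>\<tau>. p \<tau> \<bullet> strategy f q0 p \<tau>) has_integral
      L (state q0 p T) - L q0 + integral {0..T} (\<lambda>\<tau>. p \<tau> $ j)) {0..T}"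
    by simp
  then show ?thesis
    by (simp add: integral_unique)
qed

lemma regret_eq_Max_storage_drop:
  fixes f :: "real^'n \<Rightarrow> real^'n"
  assumes L: "\<And>j. lossless_via f (axis j 1) (L j)" and p: "admissible_input p" and T: "0 \<le> T"
  shows "regret f q0 p T = Max (range (\<lambda>j. L j q0 - L j (state q0 p T)))"
proof -
  let ?gain = "\<lambda>j. integral {0..T} (\<lambda>\<tau>. p \<tau> $ j)"
  let ?payoff = "integral {0..T} (\<lambda>\<tau>. p \<tau> \<bullet> strategy f q0 p \<tau>)"
  have "regret f q0 p T = Max (range ?gain) + - ?payoff"
    by (simp add: regret_def)
  also have "\<dots> = Max (range (\<lambda>j. ?gain j + - ?payoff))"
    by (rule Max_add_commute[symmetric]) auto
  also have "\<dots> = Max (range (\<lambda>j. L j q0 - L j (state q0 p T)))"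
    using lossless_via_axis_storage_drop[OF L p T] by simp
  finally show ?thesis .
qed

lemma constant_regret_imp_storage_bdd_below:
  fixes f :: "real^'n \<Rightarrow> real^'n"
  assumes "constant_regret f" and L: "\<And>j. lossless_via f (axis j 1) (L j)"
  shows "bdd_below (range (L j))"
proof -
  obtain C where C: "\<And>p T. admissible_input p \<Longrightarrow> 0 < T \<Longrightarrow> regret f 0 p T \<le> C"
    using assms(1) unfolding constant_regret_def by blast
  have "L j 0 - C \<le> L j q" for q
  proof -
    have "L j 0 - L j q \<le> Max (range (\<lambda>i. L i 0 - L i q))"
      by (rule Max_ge) auto
    also have "\<dots> = regret f 0 (\<lambda>\<tau>. q) 1"
      using regret_eq_Max_storage_drop[OF L admissible_input_const, of 1 0]
      by (simp add: state_const_input)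
    also have "\<dots> \<le> C"
      by (rule C[OF admissible_input_const]) simp
    finally show ?thesis
      by simp
  qed
  then show ?thesis
    by (rule bdd_belowI2)
qed

lemma storage_bdd_below_imp_constant_regret:
  fixes f :: "real^'n \<Rightarrow> real^'n"
  assumes L: "\<And>j. lossless_via f (axis j 1) (L j)" and bdd: "\<And>j. bdd_below (range (L j))"
  shows "constant_regret f"
proof -
  obtain m where m: "\<And>j q. m j \<le> L j q"
    using bdd unfolding bdd_below_def by (metis rangeI)
  have "regret f q0 p T \<le> Max (range (\<lambda>j. L j q0 - m j))"
    if p: "admissible_input p" and "0 < T" for q0 p T
  proof -
    have "regret f q0 p T = Max (range (\<lambda>j. L j q0 - L j (state q0 p T)))"
      using regret_eq_Max_storage_drop[OF L p] \<open>0 < T\<close> by simp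
    also have "\<dots> \<le> Max (range (\<lambda>j. L j q0 - m j))"
      by (intro Max.boundedI) (auto intro!: order_trans[OF diff_left_mono[OF m] Max_ge])
    finally show ?thesis .
  qed
  then show ?thesis
    unfolding constant_regret_def by blast
qed

theorem proposition4p4:
  fixes f :: "real^'n \<Rightarrow> real^'n"
  assumes "\<forall>q. f q \<in> prob_simplex"
    and "lossless_dynamic f"
  shows "constant_regret f \<longleftrightarrow> finitely_lossless_dynamic f"
proof
  assume "constant_regret f"
  obtain L where L: "\<And>j. lossless_via f (axis j 1) (L j)"
    using assms(2) choice[of "\<lambda>j L. lossless_via f (axis j 1) L"]
    unfolding lossless_dynamic_def by blast
  show "finitely_lossless_dynamic f"
    unfolding finitely_lossless_dynamic_def finitely_lossless_via_def
    using L constant_regret_imp_storage_bdd_below[OF \<open>constant_regret f\<close> L] by meson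
next
  assume "finitely_lossless_dynamic f"
  then obtain L where "\<And>j. lossless_via f (axis j 1) (L j)" "\<And>j. bdd_below (range (L j))"
    unfolding finitely_lossless_dynamic_def finitely_lossless_via_def by metis
  then show "constant_regret f"
    by (rule storage_bdd_below_imp_constant_regret)
qed

end
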